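(* Let $a_1,\ldots,a_k\in[n]$, $N=a_1+\cdots+a_k$, let $j\in[\max(a_1,\ldots,a_k),\min(N,n)]$ and let $t$ be any term of $B_j$. Let $D_{j,t}$ be the set of $k$-tuples $(\sigma_1,\ldots,\sigma_k)$, with $\sigma_i$ a term of $B_{a_i}$, such that the set of cards hit by the tuple is exactly $\{1,\ldots,j\}$ and $\sigma_1\sigma_2\cdots\sigma_k=t$ in $S_n$. Define $\phi_j(\sigma_1,\ldots,\sigma_k)=\{\alpha_1,\ldots,\alpha_j\}$ where $\alpha_c=\{l\in[N]:\text{the $l$-th hitter hits card } c\}$. Then $\phi_j$ is a well-defined bijection from $D_{j,t}$ onto $Q_j^{a_1,\ldots,a_k}$.
   Context: Elements of $S_n$ are written in deck notation: a word $c_1c_2\cdots c_n$ (a rearrangement of $1,\ldots,n$) is the deck in which card $c_i$ lies in position $i$; the identity is $12\cdots n$. Multiplication: for $\sigma=c_1\cdots c_n$ and $\tau=d_1\cdots d_n$, $\sigma\tau=c_{d_1}c_{d_2}\cdots c_{d_n}$ (first $\sigma$, then $\tau$ is applied to the deck). For $a\in[n]$, a term of $B_a$ is a word $c_1\cdots c_n\in S_n$ in which the letters $a+1,\ldots,n$ appear in increasing order; $B_a\in\mathbb{Q}[S_n]$ is the sum of all terms of $B_a$. Let $A_i=a_1+\cdots+a_i$ ($A_0=0$) and $I_i=\{A_{i-1}+1,\ldots,A_i\}$. Hitting: given a tuple $(\sigma_1,\ldots,\sigma_k)$ with $\sigma_i$ a term of $B_{a_i}$, let $d^{(0)}=12\cdots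 n$ and $d^{(i)}=\sigma_1\cdots\sigma_i$ (the deck after $i$ shuffles). For $l=A_{i-1}+m$ with $1\le m\le a_i$, the $l$-th hitter hits the card lying in position $m$ of $d^{(i-1)}$. The cards hit by the tuple are those hit by some hitter. $Q_j^{a_1,\ldots,a_k}$ is the set of all partitions of $[N]$ into exactly $j$ nonempty blocks such that no block contains two distinct elements of the same segment $I_i$. *)

theory Defs
  imports "HOL-Combinatorics.Permutations" "HOL-Library.Disjoint_Sets"
begin

(* Decks in S_n are functions sigma :: nat => nat with "sigma permutes {1..n}";
   sigma p is the card lying in position p.  Deck multiplication sigma*tau
   (first sigma, then tau) is function composition sigma o tau. *)

definition termB :: "nat \<Rightarrow> nat \<Rightarrow> (nat \<Rightarrow> nat) \<Rightarrow> bool" where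
  "termB n a \<sigma> \<longleftrightarrow> \<sigma> permutes {1..n} \<and>
     (\<forall>p\<in>{1..n}. \<forall>q\<in>{1..n}. p < q \<and> a < \<sigma> p \<and> a < \<sigma> q \<longrightarrow> \<sigma> p < \<sigma> q)"

definition Apart :: "(nat \<Rightarrow> nat) \<Rightarrow> nat \<Rightarrow> nat" where
  "Apart a i = (\<Sum>r\<in>{1..i}. a r)"

definition seg :: "(nat \<Rightarrow> nat) \<Rightarrow> nat \<Rightarrow> nat set" where
  "seg a i = {Apart a (i - 1) + 1 .. Apart a i}"

fun deck :: "(nat \<Rightarrow> (nat \<Rightarrow> nat)) \<Rightarrow> nat \<Rightarrow> (nat \<Rightarrow> nat)" where
  "deck sig 0 = id"
| "deck sig (Suc i) = deck sig i \<circ> sig (Suc i)"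

definition hits :: "nat \<Rightarrow> (nat \<Rightarrow> nat) \<Rightarrow> (nat \<Rightarrow> (nat \<Rightarrow> nat)) \<Rightarrow> nat \<Rightarrow> nat \<Rightarrow> bool" where
  "hits k a sig l c \<longleftrightarrow>
     (\<exists>i\<in>{1..k}. \<exists>m\<in>{1..a i}. l = Apart a (i - 1) + m \<and> deck sig (i - 1) m = c)"

definition cards_hit :: "nat \<Rightarrow> (nat \<Rightarrow> nat) \<Rightarrow> (nat \<Rightarrow> (nat \<Rightarrow> nat)) \<Rightarrow> nat set" where
  "cards_hit k a sig = {c. \<exists>l\<in>{1..Apart a k}. hits k a sig l c}"

(* D_{j,t}: tuples (sigma_1,...,sigma_k), represented as functions on {1..k}
   (identity outside {1..k}) *)
definition Dset :: "nat \<Rightarrow> nat \<Rightarrow> (nat \<Rightarrow> nat) \<Rightarrow> nat \<Rightarrow> (nat \<Rightarrow> nat) \<Rightarrow> (nat \<Rightarrow> (nat \<Rightarrow> nat)) set" where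
  "Dset n k a j t = {sig. (\<forall>i\<in>{1..k}. termB n (a i) (sig i)) \<and>
                          (\<forall>i. i \<notin> {1..k} \<longrightarrow> sig i = id) \<and>
                          cards_hit k a sig = {1..j} \<and>
                          deck sig k = t}"

definition phi :: "nat \<Rightarrow> (nat \<Rightarrow> nat) \<Rightarrow> nat \<Rightarrow> (nat \<Rightarrow> (nat \<Rightarrow> nat)) \<Rightarrow> nat set set" where
  "phi k a j sig = (\<lambda>c. {l\<in>{1..Apart a k}. hits k a sig l c}) ` {1..j}"

definition Qset :: "nat \<Rightarrow> (nat \<Rightarrow> nat) \<Rightarrow> nat \<Rightarrow> nat set set set" where
  "Qset k a j = {P. partition_on {1..Apart a k} P \<and> card P = j \<and>
                    (\<forall>B\<in>P. \<forall>i\<in>{1..k}. \<forall>x\<in>B. \<forall>y\<in>B. x \<in> seg a i \<and> y \<in> seg a i \<longrightarrow> x = y)}"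

end

theory Submission
  imports Defs
begin

text \<open>
  For a relation \<open>R l c\<close> (hitter \<open>l\<close> hits card \<open>c\<close>) and a threshold \<open>A\<close>, the key of a
  card is the first hitter after \<open>A\<close> that hits it, or \<open>N\<close> plus its position in the final
  deck \<open>t\<close> if there is none. After \<open>i\<close> shuffles the cards lie in the order of their keys
  at threshold \<open>A\<^sub>i\<close>: going back from the \<open>i\<close>-th deck to the previous one, the top \<open>a\<^sub>i\<close>
  cards of the earlier deck are exactly the cards hit by the hitters of \<open>I\<^sub>i\<close>, in that
  order, while a term of \<open>B\<^bsub>a\<^sub>i\<^esub>\<close> keeps all other cards in their relative order. Hence
  a tuple is determined by its hitting relation. As the initial deck is the identity,
  the first hits of the cards \<open>1, \<dots>, j\<close> occur in increasing order, so card \<open>c\<close> is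
  recovered from \<open>\<phi>\<^sub>j\<close> as the label of the block with the \<open>c\<close>-th smallest minimum, and
  \<open>\<phi>\<^sub>j\<close> is injective. Conversely, labelling the blocks of a partition in \<open>Q\<^sub>j\<close> in this
  way defines a hitting relation, and the decks that order the cards by its keys form
  a tuple in \<open>D\<^sub>j\<^sub>,\<^sub>t\<close> with that relation, which \<open>\<phi>\<^sub>j\<close> maps to the given partition.
\<close>

section \<open>Ranks\<close>

definition rank :: "'a::linorder set \<Rightarrow> 'a \<Rightarrow> nat" where
  "rank S x = card {y\<in>S. y \<le> x}"

lemma rank_less_iff:
  fixes S :: "'a::linorder set"
  assumes "finite S" "x \<in> S" "y \<in> S"
  shows "rank S x < rank S y \<longleftrightarrow> x < y"
proof
  assume "x < y"
  then have "y \<in> {z\<in>S. z \<le> y} - {z\<in>S. z \<le> x}" using assms(3) by auto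
  then have "{z\<in>S. z \<le> x} \<subset> {z\<in>S. z \<le> y}" using \<open>x < y\<close> by auto
  then show "rank S x < rank S y" unfolding rank_def using assms(1) by (intro psubset_card_mono) auto
next
  assume "rank S x < rank S y"
  then have "\<not> {z\<in>S. z \<le> y} \<subseteq> {z\<in>S. z \<le> x}"
    unfolding rank_def using assms(1) by (metis (no_types, lifting) card_mono finite_subset leD mem_Collect_eq subsetI)
  then show "x < y" by auto
qed

lemma bij_betw_rank:
  fixes S :: "'a::linorder set"
  assumes "finite S"
  shows "bij_betw (rank S) S {1..card S}"
proof -
  have inj: "inj_on (rank S) S"
    by (intro inj_onI) (metis assms rank_less_iff linorder_neqE less_irrefl)
  have "rank S ` S \<subseteq> {1..card S}"
  proof
    fix r assume "r \<in> rank S ` S"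
    then obtain x where x: "x \<in> S" "r = rank S x" by blast
    have "x \<in> {y\<in>S. y \<le> x}" using x by simp
    then have "1 \<le> r" using assms x by (simp add: rank_def Suc_le_eq card_gt_0_iff) blast
    moreover have "r \<le> card S" using x assms card_mono[of S "{y\<in>S. y \<le> x}"] by (auto simp: rank_def)
    ultimately show "r \<in> {1..card S}" by simp
  qed
  moreover have "card (rank S ` S) = card {1..card S}" using inj by (simp add: card_image)
  ultimately have "rank S ` S = {1..card S}" by (intro card_subset_eq) auto
  with inj show ?thesis by (simp add: bij_betw_def)
qed

lemma rank_atLeastAtMost: "m \<in> {1..n} \<Longrightarrow> rank {1..n} m = (m::nat)"
proof -
  assume "m \<in> {1..n}"
  then have "{y\<in>{1..n}. y \<le> m} = {1..m}" by auto
  then show ?thesis by (simp add: rank_def)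
qed

lemma rank_image:
  assumes "strict_mono_on S f" "s \<in> S"
  shows "rank (f ` S) (f s) = rank S s"
proof -
  have "{y \<in> f ` S. y \<le> f s} = f ` {y\<in>S. y \<le> s}"
    using assms by (auto simp: strict_mono_on_leD strict_mono_on_less_eq)
  moreover have "inj_on f {y\<in>S. y \<le> s}"
    using strict_mono_on_imp_inj_on[OF assms(1)] by (rule inj_on_subset) auto
  ultimately show ?thesis unfolding rank_def by (simp add: card_image)
qed

definition ranking_perm :: "nat \<Rightarrow> (nat \<Rightarrow> 'a::linorder) \<Rightarrow> nat \<Rightarrow> nat" where
  "ranking_perm n f c = (if c \<in> {1..n} then rank (f ` {1..n}) (f c) else c)"

lemma ranking_perm_permutes:
  assumes "inj_on f {1..n}"
  shows "ranking_perm n f permutes {1..n}"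
proof (rule bij_imp_permutes)
  have "bij_betw (rank (f ` {1..n}) \<circ> f) {1..n} {1..n}"
    using bij_betw_trans[OF inj_on_imp_bij_betw[OF assms] bij_betw_rank[of "f ` {1..n}"]] assms
    by (simp add: card_image)
  moreover have "\<forall>x\<in>{1..n}. (rank (f ` {1..n}) \<circ> f) x = ranking_perm n f x"
    by (simp add: ranking_perm_def)
  ultimately show "bij_betw (ranking_perm n f) {1..n} {1..n}"
    using bij_betw_cong[of "{1..n}" "rank (f ` {1..n}) \<circ> f" "ranking_perm n f"] by simp
qed (auto simp: ranking_perm_def)

lemma ranking_perm_less_iff:
  "x \<in> {1..n} \<Longrightarrow> y \<in> {1..n} \<Longrightarrow> ranking_perm n f x < ranking_perm n f y \<longleftrightarrow> f x < f y"
  by (simp add: ranking_perm_def rank_less_iff)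

lemma ranking_perm_unique:
  assumes p: "p permutes {1..n}"
    and order: "\<forall>x\<in>{1..n}. \<forall>y\<in>{1..n}. p x < p y \<longleftrightarrow> f x < f y"
  shows "ranking_perm n f = p"
proof
  fix x
  let ?g = "f \<circ> inv p"
  have inv_p: "inv p ` {1..n} = {1..n}" "\<And>u. p (inv p u) = u"
    using permutes_image[OF permutes_inv[OF p]] permutes_inverses(1)[OF p] by auto
  have "strict_mono_on {1..n} ?g"
    using order inv_p by (intro strict_mono_onI) (metis comp_apply imageI)
  moreover have "?g ` {1..n} = f ` {1..n}" using inv_p(1) by (metis image_comp)
  ultimately have "rank (f ` {1..n}) (?g u) = u" if "u \<in> {1..n}" for u
    using rank_image[of "{1..n}" ?g u] rank_atLeastAtMost[OF that] that by simp
  from this[of "p x"] show "ranking_perm n f x = p x"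
    using permutes_inverses(2)[OF p] permutes_in_image[OF p] permutes_not_in[OF p]
    by (auto simp: ranking_perm_def)
qed

definition block_label :: "'a::linorder set set \<Rightarrow> 'a set \<Rightarrow> nat" where
  "block_label P B = rank (Min ` P) (Min B)"

lemma partition_on_Min_in:
  assumes "partition_on A P" "finite A" "B \<in> P"
  shows "Min B \<in> B"
proof -
  have "B \<subseteq> A" "B \<noteq> {}" using partition_onD1[OF assms(1)] partition_onD3[OF assms(1)] assms(3) by auto
  then show ?thesis using assms(2) finite_subset by (intro Min_in) auto
qed

lemma inj_on_Min_partition:
  assumes "partition_on A P" "finite A"
  shows "inj_on Min P"
  using partition_on_Min_in[OF assms] partition_onD2[OF assms(1)]
  by (intro inj_onI) (metis disjointD disjoint_iff)

lemma bij_betw_block_label: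
  assumes "partition_on A P" "finite A"
  shows "bij_betw (block_label P) P {1..card P}"
proof -
  have "finite (Min ` P)" using finite_elements[OF assms(2,1)] by simp
  then have "bij_betw (rank (Min ` P) \<circ> Min) P {1..card (Min ` P)}"
    using bij_betw_trans[OF inj_on_imp_bij_betw[OF inj_on_Min_partition[OF assms]] bij_betw_rank]
    by blast
  then show ?thesis
    using card_image[OF inj_on_Min_partition[OF assms]] by (simp add: block_label_def[abs_def] comp_def)
qed

lemma block_label_less_iff:
  assumes "partition_on A P" "finite A" "B \<in> P" "B' \<in> P"
  shows "block_label P B < block_label P B' \<longleftrightarrow> Min B < Min B'"
  using assms finite_elements[OF assms(2,1)] by (simp add: block_label_def rank_less_iff)

section \<open>Segments and hitters\<close>

lemma Apart_0: "Apart a 0 = 0"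
  by (simp add: Apart_def)

lemma Apart_Suc: "Apart a (Suc i) = Apart a i + a (Suc i)"
  by (simp add: Apart_def add.commute)

lemma Apart_pred: "i \<ge> 1 \<Longrightarrow> Apart a i = Apart a (i - 1) + a i"
  using Apart_Suc[of a "i - 1"] by simp

lemma Apart_mono: "i \<le> i' \<Longrightarrow> Apart a i \<le> Apart a i'"
  unfolding Apart_def by (intro sum_mono2) auto

lemma segment_decomp_unique:
  assumes "Apart a (i - 1) + m = Apart a (i' - 1) + m'" "i \<ge> 1" "i' \<ge> 1"
    and "m \<in> {1..a i}" "m' \<in> {1..a i'}"
  shows "i = i' \<and> m = m'"
proof -
  have False if "i < i'" "Apart a (i - 1) + m = Apart a (i' - 1) + m'" "i \<ge> 1"
    "m \<in> {1..a i}" "m' \<in> {1..a i'}" for i i' m m'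
  proof -
    have "Apart a (i - 1) + m \<le> Apart a i" using that Apart_pred[of i a] by auto
    also have "\<dots> \<le> Apart a (i' - 1)" using that by (intro Apart_mono) auto
    finally show False using that by simp
  qed
  then have "i = i'" using assms by (metis linorder_neqE)
  then show ?thesis using assms by simp
qed

lemma segment_decomp_exists:
  "l \<in> {1..Apart a k} \<Longrightarrow> \<exists>i\<in>{1..k}. \<exists>m\<in>{1..a i}. l = Apart a (i - 1) + m"
proof (induction k)
  case (Suc k)
  show ?case
  proof (cases "l \<le> Apart a k")
    case True
    then show ?thesis using Suc by fastforce
  next
    case False
    then show ?thesis using Suc.prems Apart_Suc[of a k]
      by (intro bexI[of _ "Suc k"] bexI[of _ "l - Apart a k"]) auto
  qed
qed (simp add: Apart_0)

lemma hits_in_range: "hits k a sig l c \<Longrightarrow> l \<in> {1..Apart a k}"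
proof -
  assume "hits k a sig l c"
  then obtain i m where im: "i \<in> {1..k}" "m \<in> {1..a i}" "l = Apart a (i - 1) + m"
    unfolding hits_def by auto
  have "Apart a (i - 1) + m \<le> Apart a i" using im Apart_pred[of i a] by auto
  also have "\<dots> \<le> Apart a k" using im by (intro Apart_mono) auto
  finally show ?thesis using im by auto
qed

lemma hits_segment_iff:
  assumes "i \<in> {1..k}" "m \<in> {1..a i}"
  shows "hits k a sig (Apart a (i - 1) + m) c \<longleftrightarrow> deck sig (i - 1) m = c"
  using assms segment_decomp_unique[of a i m] unfolding hits_def by (metis atLeastAtMost_iff)

lemma hits_unique: "hits k a sig l c \<Longrightarrow> hits k a sig l c' \<Longrightarrow> c = c'"
  unfolding hits_def using segment_decomp_unique[of a] by (metis atLeastAtMost_iff)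

lemma deck_pred: "i \<ge> 1 \<Longrightarrow> deck sig i = deck sig (i - 1) \<circ> sig i"
  by (cases i) auto

lemma deck_permutes:
  assumes "\<forall>i\<in>{1..k}. sig i permutes {1..n}" "i \<le> k"
  shows "deck sig i permutes {1..n}"
  using assms(2)
proof (induction i)
  case 0
  then show ?case by (simp add: permutes_id[unfolded id_def] id_def)
next
  case (Suc i)
  then have "deck sig i \<circ> sig (Suc i) permutes {1..n}"
    using assms(1) by (intro permutes_compose) auto
  then show ?case by (simp only: deck.simps)
qed

lemma permutes_inv_in: "t permutes S \<Longrightarrow> c \<in> S \<Longrightarrow> inv t c \<in> S"
  by (meson permutes_in_image permutes_inv)

lemma termB_permutes: "termB n b s \<Longrightarrow> s permutes {1..n}"
  by (simp add: termB_def)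

lemma termB_less_iff:
  assumes "termB n b s" "p \<in> {1..n}" "q \<in> {1..n}" "b < s p" "b < s q"
  shows "s p < s q \<longleftrightarrow> p < q"
proof -
  have "inj s" using termB_permutes[OF assms(1)] by (rule permutes_inj)
  then show ?thesis using assms unfolding termB_def by (metis linorder_neqE less_asym inj_eq)
qed

definition hit_block :: "nat \<Rightarrow> (nat \<Rightarrow> nat) \<Rightarrow> (nat \<Rightarrow> nat \<Rightarrow> nat) \<Rightarrow> nat \<Rightarrow> nat set" where
  "hit_block k a sig c = {l\<in>{1..Apart a k}. hits k a sig l c}"

lemma phi_eq_hit_blocks: "phi k a j sig = hit_block k a sig ` {1..j}"
  by (simp add: phi_def hit_block_def)

lemma hit_block_eq: "hit_block k a sig c = {l. hits k a sig l c}"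
  using hits_in_range by (auto simp: hit_block_def)

lemma cards_hit_eq: "cards_hit k a sig = {c. hit_block k a sig c \<noteq> {}}"
  by (auto simp: cards_hit_def hit_block_def)

lemma hit_blocks_disjoint: "c \<noteq> c' \<Longrightarrow> hit_block k a sig c \<inter> hit_block k a sig c' = {}"
  using hits_unique by (auto simp: hit_block_eq)

lemma Union_hit_blocks: "(\<Union>c\<in>cards_hit k a sig. hit_block k a sig c) = {1..Apart a k}"
proof
  show "(\<Union>c\<in>cards_hit k a sig. hit_block k a sig c) \<subseteq> {1..Apart a k}"
    by (auto simp: hit_block_def)
next
  show "{1..Apart a k} \<subseteq> (\<Union>c\<in>cards_hit k a sig. hit_block k a sig c)"
  proof
    fix l assume l: "l \<in> {1..Apart a k}"
    then obtain i m where "i \<in> {1..k}" "m \<in> {1..a i}" "l = Apart a (i - 1) + m"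
      using segment_decomp_exists by blast
    then have "hits k a sig l (deck sig (i - 1) m)" using hits_segment_iff by blast
    then show "l \<in> (\<Union>c\<in>cards_hit k a sig. hit_block k a sig c)"
      using l unfolding cards_hit_def hit_block_def by blast
  qed
qed

lemma hit_block_segment:
  assumes perms: "\<forall>i\<in>{1..k}. sig i permutes {1..n}" and i: "i \<in> {1..k}"
    and "l \<in> hit_block k a sig c" "l' \<in> hit_block k a sig c" "l \<in> seg a i" "l' \<in> seg a i"
  shows "l = l'"
proof -
  have "deck sig (i - 1) permutes {1..n}" using deck_permutes[OF perms, of "i - 1"] i by auto
  then have inj: "inj (deck sig (i - 1))" by (rule permutes_inj)
  have "l - Apart a (i - 1) \<in> {1..a i}" "l' - Apart a (i - 1) \<in> {1..a i}"
    using assms(5,6) i Apart_pred[of i a] by (auto simp: seg_def)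
  moreover have "l = Apart a (i - 1) + (l - Apart a (i - 1))" "l' = Apart a (i - 1) + (l' - Apart a (i - 1))"
    using assms(5,6) by (auto simp: seg_def)
  ultimately have "deck sig (i - 1) (l - Apart a (i - 1)) = c" "deck sig (i - 1) (l' - Apart a (i - 1)) = c"
    using assms(3,4) hits_segment_iff[where k=k and a=a and sig=sig and c=c, OF i] by (metis hit_block_eq mem_Collect_eq)+
  then show ?thesis using inj \<open>l = _\<close> \<open>l' = _\<close> by (metis injD)
qed

lemma phi_in_Qset:
  assumes "sig \<in> Dset n k a j t"
  shows "phi k a j sig \<in> Qset k a j"
proof -
  have perms: "\<forall>i\<in>{1..k}. sig i permutes {1..n}"
    and hit: "cards_hit k a sig = {1..j}" using assms termB_permutes by (auto simp: Dset_def)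
  have nonempty: "hit_block k a sig c \<noteq> {}" if "c \<in> {1..j}" for c
    using that hit by (auto simp: cards_hit_eq)
  have inj: "inj_on (hit_block k a sig) {1..j}"
  proof (rule inj_onI, rule ccontr)
    fix c c' assume "c \<in> {1..j}" "hit_block k a sig c = hit_block k a sig c'" "c \<noteq> c'"
    then show False using nonempty hit_blocks_disjoint[of c c' k a sig] by simp
  qed
  have "partition_on {1..Apart a k} (phi k a j sig)"
  proof (rule partition_onI)
    show "\<Union> (phi k a j sig) = {1..Apart a k}"
      unfolding phi_eq_hit_blocks using Union_hit_blocks[of k a sig] hit by simp
    show "disjnt B B'" if B: "B \<in> phi k a j sig" "B' \<in> phi k a j sig" "B \<noteq> B'" for B B'
    proof -
      obtain c c' where "B = hit_block k a sig c" "B' = hit_block k a sig c'"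
        using B(1,2) unfolding phi_eq_hit_blocks by blast
      then show ?thesis using B(3) hit_blocks_disjoint[of c c'] by (auto simp: disjnt_def)
    qed
    show "{} \<notin> phi k a j sig" unfolding phi_eq_hit_blocks using nonempty by (metis imageE)
  qed
  moreover have "card (phi k a j sig) = j"
    unfolding phi_eq_hit_blocks using card_image[OF inj] by simp
  moreover have "\<forall>B\<in>phi k a j sig. \<forall>i\<in>{1..k}. \<forall>x\<in>B. \<forall>y\<in>B. x \<in> seg a i \<and> y \<in> seg a i \<longrightarrow> x = y"
  proof (intro ballI impI)
    fix B i x y assume "B \<in> phi k a j sig" "i \<in> {1..k}" "x \<in> B" "y \<in> B" "x \<in> seg a i \<and> y \<in> seg a i"
    then show "x = y" unfolding phi_eq_hit_blocks using hit_block_segment[OF perms] by blast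
  qed
  ultimately show ?thesis by (simp add: Qset_def)
qed

section \<open>Keys\<close>

definition hit_key :: "(nat \<Rightarrow> nat \<Rightarrow> bool) \<Rightarrow> nat \<Rightarrow> (nat \<Rightarrow> nat) \<Rightarrow> nat \<Rightarrow> nat \<Rightarrow> nat" where
  "hit_key R N t A c = (if \<exists>l>A. R l c then LEAST l. A < l \<and> R l c else N + inv t c)"

lemma hit_key_hit:
  assumes "R l c" "A < l"
  shows "A < hit_key R N t A c \<and> hit_key R N t A c \<le> l \<and> R (hit_key R N t A c) c"
proof -
  have "\<exists>l>A. R l c" using assms by auto
  then show ?thesis
    using LeastI[of "\<lambda>l. A < l \<and> R l c" l] Least_le[of "\<lambda>l. A < l \<and> R l c" l] assms
    by (simp add: hit_key_def)
qed

lemma hit_key_eq: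
  assumes "R l c" "A < l" "\<And>l'. A < l' \<Longrightarrow> l' < l \<Longrightarrow> \<not> R l' c"
  shows "hit_key R N t A c = l"
  using hit_key_hit[of R l c A N t, OF assms(1,2)] assms(3) by (metis le_neq_implies_less)

lemma hit_key_no_hit: "\<not> (\<exists>l>A. R l c) \<Longrightarrow> hit_key R N t A c = N + inv t c"
  unfolding hit_key_def by (rule if_not_P)

lemma hit_key_gt:
  assumes "t permutes {1..n}" "c \<in> {1..n}" "A \<le> N"
  shows "A < hit_key R N t A c"
  using hit_key_hit[of R _ c A N t] hit_key_no_hit[of A R c N t] permutes_inv_in[OF assms(1,2)] assms(3)
  by fastforce

lemma hit_key_le_imp_hit:
  assumes "t permutes {1..n}" "c \<in> {1..n}" "hit_key R N t A c \<le> N"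
  shows "A < hit_key R N t A c \<and> R (hit_key R N t A c) c"
  using hit_key_hit[of R _ c A N t] hit_key_no_hit[of A R c N t] permutes_inv_in[OF assms(1,2)] assms(3)
  by fastforce

lemma inj_on_hit_key:
  assumes bound: "\<And>l c. R l c \<Longrightarrow> l \<le> N" and unique: "\<And>l c c'. R l c \<Longrightarrow> R l c' \<Longrightarrow> c = c'"
    and t: "t permutes {1..n}"
  shows "inj_on (hit_key R N t A) {1..n}"
proof (rule inj_onI)
  fix x y assume xy: "x \<in> {1..n}" "y \<in> {1..n}" and eq: "hit_key R N t A x = hit_key R N t A y"
  show "x = y"
  proof (cases "hit_key R N t A x \<le> N")
    case True
    then show ?thesis using hit_key_le_imp_hit[OF t] xy eq unique by metis
  next
    case False
    then have "\<not> (\<exists>l>A. R l x)" "\<not> (\<exists>l>A. R l y)"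
      using eq hit_key_hit[of R _ x A N t] hit_key_hit[of R _ y A N t] bound by (metis le_trans)+
    then have "inv t x = inv t y" using eq by (simp add: hit_key_no_hit)
    then show ?thesis by (metis t permutes_inverses(1))
  qed
qed

lemma hit_key_skip:
  assumes "A \<le> A'" "\<And>l. A < l \<Longrightarrow> l \<le> A' \<Longrightarrow> \<not> R l c"
  shows "hit_key R N t A c = hit_key R N t A' c"
proof -
  have "(\<lambda>l. A < l \<and> R l c) = (\<lambda>l. A' < l \<and> R l c)"
    using assms by (auto simp: fun_eq_iff) (meson not_le)
  then show ?thesis unfolding hit_key_def by metis
qed

lemma hit_key_segment:
  assumes seg: "\<And>m. m \<in> {1..b} \<Longrightarrow> R (A + m) c \<longleftrightarrow> p = m"
  shows hit_key_segment_hit: "p \<in> {1..b} \<Longrightarrow> hit_key R N t A c = A + p"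
    and hit_key_segment_skip: "p \<notin> {1..b} \<Longrightarrow> hit_key R N t A c = hit_key R N t (A + b) c"
proof -
  assume "p \<in> {1..b}"
  then show "hit_key R N t A c = A + p"
  proof (intro hit_key_eq)
    fix l assume "A < l" "l < A + p"
    then have "l - A \<in> {1..b}" "p \<noteq> l - A" using \<open>p \<in> {1..b}\<close> by auto
    then show "\<not> R l c" using seg \<open>A < l\<close> by fastforce
  qed (use seg in auto)
next
  assume "p \<notin> {1..b}"
  then show "hit_key R N t A c = hit_key R N t (A + b) c"
  proof (intro hit_key_skip)
    fix l assume "A < l" "l \<le> A + b"
    then have "l - A \<in> {1..b}" "p \<noteq> l - A" using \<open>p \<notin> {1..b}\<close> by auto
    then show "\<not> R l c" using seg \<open>A < l\<close> by fastforce
  qed simp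
qed

section \<open>Injectivity of \<open>phi\<close>\<close>

locale shuffle_tuple =
  fixes n k :: nat and a :: "nat \<Rightarrow> nat" and sig :: "nat \<Rightarrow> nat \<Rightarrow> nat" and t :: "nat \<Rightarrow> nat"
  assumes termB_sig: "\<forall>i\<in>{1..k}. termB n (a i) (sig i)"
    and deck_k: "deck sig k = t"
begin

abbreviation key :: "nat \<Rightarrow> nat \<Rightarrow> nat" where
  "key i \<equiv> hit_key (hits k a sig) (Apart a k) t (Apart a i)"

lemma deck_sig_permutes: "i \<le> k \<Longrightarrow> deck sig i permutes {1..n}"
  using termB_sig termB_permutes by (intro deck_permutes) auto

lemma t_permutes: "t permutes {1..n}"
  using deck_sig_permutes[of k] deck_k by simp

lemma inv_deck_pred: "i \<in> {1..k} \<Longrightarrow> inv (deck sig (i - 1)) x = sig i (inv (deck sig i) x)"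
proof -
  assume i: "i \<in> {1..k}"
  then have perm_i: "deck sig i permutes {1..n}" and perm_i': "deck sig (i - 1) permutes {1..n}"
    using deck_sig_permutes by auto
  have "deck sig (i - 1) (sig i (inv (deck sig i) x)) = x"
    using deck_pred[of i sig] i permutes_inverses(1)[OF perm_i] by (metis atLeastAtMost_iff comp_apply)
  then show ?thesis using permutes_inverses(2)[OF perm_i'] by metis
qed

lemma hits_segment_iff_inv_deck:
  assumes "i \<in> {1..k}" "m \<in> {1..a i}"
  shows "hits k a sig (Apart a (i - 1) + m) x \<longleftrightarrow> inv (deck sig (i - 1)) x = m"
proof -
  have "deck sig (i - 1) permutes {1..n}" using assms(1) deck_sig_permutes by auto
  then show ?thesis
    using hits_segment_iff[where k=k and a=a and sig=sig and c=x, OF assms] permutes_inv_eq by metis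
qed

lemma key_pred_in_segment:
  assumes "i \<in> {1..k}" "inv (deck sig (i - 1)) x \<in> {1..a i}"
  shows "key (i - 1) x = Apart a (i - 1) + inv (deck sig (i - 1)) x"
  using hit_key_segment_hit[where R="hits k a sig" and A="Apart a (i - 1)",
      OF hits_segment_iff_inv_deck[OF assms(1)] assms(2)] .

lemma key_pred_beyond_segment:
  assumes i: "i \<in> {1..k}" and x: "x \<in> {1..n}" and "inv (deck sig (i - 1)) x \<notin> {1..a i}"
  shows "key (i - 1) x = key i x" "Apart a i < key i x"
proof -
  have "Apart a i = Apart a (i - 1) + a i" using i Apart_pred by auto
  then show "key (i - 1) x = key i x"
    using hit_key_segment_skip[where R="hits k a sig" and A="Apart a (i - 1)",
        OF hits_segment_iff_inv_deck[OF i] assms(3)] by simp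
  show "Apart a i < key i x"
    using hit_key_gt[OF t_permutes x] Apart_mono[of i k a] i by auto
qed

lemma key_order_step:
  assumes i: "i \<in> {1..k}"
    and order_i: "\<forall>x\<in>{1..n}. \<forall>y\<in>{1..n}. inv (deck sig i) x < inv (deck sig i) y \<longleftrightarrow> key i x < key i y"
  shows "\<forall>x\<in>{1..n}. \<forall>y\<in>{1..n}.
           inv (deck sig (i - 1)) x < inv (deck sig (i - 1)) y \<longleftrightarrow> key (i - 1) x < key (i - 1) y"
proof (intro ballI)
  let ?p = "inv (deck sig i)" and ?q = "inv (deck sig (i - 1))"
  fix x y assume x: "x \<in> {1..n}" and y: "y \<in> {1..n}"
  have q_in: "?q x \<in> {1..n}" "?q y \<in> {1..n}"
    using x y permutes_inv_in[OF deck_sig_permutes[of "i - 1"]] i by auto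
  have Apart_i: "Apart a i = Apart a (i - 1) + a i" using i Apart_pred by auto
  note low = key_pred_in_segment[OF i] and high = key_pred_beyond_segment[OF i]
  consider "?q x \<in> {1..a i}" "?q y \<in> {1..a i}" | "?q x \<in> {1..a i}" "?q y \<notin> {1..a i}"
    | "?q x \<notin> {1..a i}" "?q y \<in> {1..a i}" | "?q x \<notin> {1..a i}" "?q y \<notin> {1..a i}"
    by blast
  then show "?q x < ?q y \<longleftrightarrow> key (i - 1) x < key (i - 1) y"
  proof cases
    case 1
    then show ?thesis using low by simp
  next
    case 2
    then show ?thesis using low high[OF y] q_in Apart_i by auto
  next
    case 3
    then show ?thesis using low high[OF x] q_in Apart_i by auto
  next
    case 4
    then have big: "a i < sig i (?p x)" "a i < sig i (?p y)"
      using q_in inv_deck_pred[OF i] by (metis atLeastAtMost_iff not_less)+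
    have "?q x < ?q y \<longleftrightarrow> ?p x < ?p y"
      using termB_less_iff[where n=n and s="sig i" and b="a i", OF _ _ _ big] termB_sig i
        permutes_inv_in[OF deck_sig_permutes[of i]] x y inv_deck_pred[OF i] by simp
    also have "\<dots> \<longleftrightarrow> key i x < key i y" using order_i x y by blast
    finally show ?thesis using high[OF x] high[OF y] 4 by simp
  qed
qed

lemma inv_deck_order:
  "i \<le> k \<Longrightarrow> \<forall>x\<in>{1..n}. \<forall>y\<in>{1..n}. inv (deck sig i) x < inv (deck sig i) y \<longleftrightarrow> key i x < key i y"
proof (induction "k - i" arbitrary: i)
  case 0
  then have "i = k" by simp
  moreover have "key k x = Apart a k + inv t x" for x
    using hits_in_range by (intro hit_key_no_hit) fastforce
  ultimately show ?case using deck_k by simp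
next
  case (Suc d)
  then have "Suc i \<in> {1..k}" by simp
  with key_order_step[OF this Suc.hyps(1)[of "Suc i"]] Suc.hyps(2) show ?case by simp
qed

lemma deck_eq_inv_ranking_perm:
  assumes "i \<le> k"
  shows "deck sig i = inv (ranking_perm n (key i))"
proof -
  note perm = deck_sig_permutes[OF assms]
  have "ranking_perm n (key i) = inv (deck sig i)"
    by (rule ranking_perm_unique[OF permutes_inv[OF perm] inv_deck_order[OF assms]])
  then show ?thesis by (simp add: permutes_inv_inv[OF perm])
qed

lemma first_hit_strict_mono: "strict_mono_on {1..n} (key 0)"
proof -
  have "\<forall>x\<in>{1..n}. \<forall>y\<in>{1..n}. x < y \<longleftrightarrow> key 0 x < key 0 y"
    using inv_deck_order[of 0] by (simp add: inv_id)
  then show ?thesis by (intro strict_mono_onI) blast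
qed

lemma Min_hit_block:
  assumes "c \<in> cards_hit k a sig"
  shows "Min (hit_block k a sig c) = key 0 c"
proof -
  let ?hit = "\<lambda>l. 0 < l \<and> hits k a sig l c"
  have block: "hit_block k a sig c = {l. ?hit l}"
    unfolding hit_block_eq using hits_in_range[of k a sig _ c] by fastforce
  have "finite {l. ?hit l}" unfolding block[symmetric] by (simp add: hit_block_def)
  moreover have "\<exists>l. ?hit l" using assms block by (auto simp: cards_hit_eq)
  ultimately have "(LEAST l. ?hit l) = Min (hit_block k a sig c)"
    unfolding block by (rule Least_Min)
  moreover have "key 0 c = (LEAST l. ?hit l)" using \<open>\<exists>l. ?hit l\<close> by (simp add: hit_key_def Apart_0)
  ultimately show ?thesis by simp
qed

end

lemma Dset_imp_shuffle_tuple: "sig \<in> Dset n k a j t \<Longrightarrow> shuffle_tuple n k a sig t"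
  by (simp add: Dset_def shuffle_tuple_def)

lemma block_label_hit_block:
  assumes sig: "sig \<in> Dset n k a j t" and "j \<le> n" and c: "c \<in> {1..j}"
  shows "block_label (phi k a j sig) (hit_block k a sig c) = c"
proof -
  interpret shuffle_tuple n k a sig t using Dset_imp_shuffle_tuple[OF sig] .
  have hit: "cards_hit k a sig = {1..j}" using sig by (simp add: Dset_def)
  have "strict_mono_on {1..j} (key 0)"
    using first_hit_strict_mono \<open>j \<le> n\<close> by (auto simp: strict_mono_on_def)
  moreover have "Min ` phi k a j sig = key 0 ` {1..j}"
    using Min_hit_block hit by (simp add: phi_eq_hit_blocks image_comp)
  ultimately show ?thesis
    using rank_image[OF _ c] rank_atLeastAtMost[OF c] Min_hit_block c hit
    by (simp add: block_label_def)
qed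

lemma tuple_eq_if_decks_eq:
  assumes "\<forall>i\<in>{1..k}. sig i permutes {1..n}"
    and "\<forall>i. i \<notin> {1..k} \<longrightarrow> sig i = id" "\<forall>i. i \<notin> {1..k} \<longrightarrow> sig' i = id"
    and "\<forall>i\<le>k. deck sig i = deck sig' i"
  shows "sig = sig'"
proof
  fix i
  show "sig i = sig' i"
  proof (cases "i \<in> {1..k}")
    case True
    then have "deck sig (i - 1) permutes {1..n}" using deck_permutes[OF assms(1), of "i - 1"] by auto
    then have inj: "inj (deck sig (i - 1))" by (rule permutes_inj)
    have "deck sig (i - 1) \<circ> sig i = deck sig (i - 1) \<circ> sig' i"
      using True assms(4) deck_pred[of i sig] deck_pred[of i sig'] by auto
    then have "deck sig (i - 1) (sig i x) = deck sig (i - 1) (sig' i x)" for x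
      by (metis comp_apply)
    then show ?thesis using inj by (simp add: inj_eq fun_eq_iff)
  qed (use assms(2,3) in auto)
qed

lemma hits_eq_if_phi_eq:
  assumes sig: "sig \<in> Dset n k a j t" and sig': "sig' \<in> Dset n k a j t" and "j \<le> n"
    and phi_eq: "phi k a j sig = phi k a j sig'"
  shows "hits k a sig = hits k a sig'"
proof -
  let ?P = "phi k a j sig"
  have partition: "partition_on {1..Apart a k} ?P" using phi_in_Qset[OF sig] by (simp add: Qset_def)
  have "hit_block k a sig c = hit_block k a sig' c" if c: "c \<in> {1..j}" for c
  proof (rule inj_onD[OF bij_betw_imp_inj_on[OF bij_betw_block_label[OF partition]]])
    show "block_label ?P (hit_block k a sig c) = block_label ?P (hit_block k a sig' c)"
      using block_label_hit_block[OF sig \<open>j \<le> n\<close> c] block_label_hit_block[OF sig' \<open>j \<le> n\<close> c] phi_eq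
      by simp
    show "hit_block k a sig c \<in> ?P" using c by (simp add: phi_eq_hit_blocks)
    show "hit_block k a sig' c \<in> ?P" unfolding phi_eq using c by (simp add: phi_eq_hit_blocks)
  qed simp
  moreover have "hit_block k a sig c = {}" "hit_block k a sig' c = {}" if "c \<notin> {1..j}" for c
    using sig sig' that by (auto simp: Dset_def cards_hit_eq)
  ultimately have "hit_block k a sig c = hit_block k a sig' c" for c by metis
  then show ?thesis by (auto simp: fun_eq_iff hit_block_eq)
qed

lemma Dset_eq_if_hits_eq:
  assumes sig: "sig \<in> Dset n k a j t" and sig': "sig' \<in> Dset n k a j t"
    and "hits k a sig = hits k a sig'"
  shows "sig = sig'"
proof -
  interpret S: shuffle_tuple n k a sig t using Dset_imp_shuffle_tuple[OF sig] .
  interpret S': shuffle_tuple n k a sig' t using Dset_imp_shuffle_tuple[OF sig'] .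
  have "\<forall>i\<le>k. deck sig i = deck sig' i"
    using S.deck_eq_inv_ranking_perm S'.deck_eq_inv_ranking_perm assms(3) by simp
  moreover have "\<forall>i\<in>{1..k}. sig i permutes {1..n}" using S.termB_sig termB_permutes by blast
  ultimately show ?thesis
    using tuple_eq_if_decks_eq[of k sig n sig'] sig sig' by (simp add: Dset_def)
qed

lemma inj_on_phi: "j \<le> n \<Longrightarrow> inj_on (phi k a j) (Dset n k a j t)"
  by (intro inj_onI Dset_eq_if_hits_eq hits_eq_if_phi_eq)

section \<open>Surjectivity of \<open>phi\<close>\<close>

locale partition_realisation =
  fixes n k j :: nat and a :: "nat \<Rightarrow> nat" and t :: "nat \<Rightarrow> nat" and P :: "nat set set"
  assumes a_le_n: "\<forall>i\<in>{1..k}. a i \<le> n"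
    and j_le_n: "j \<le> n"
    and termB_t: "termB n j t"
    and P_in_Qset: "P \<in> Qset k a j"
begin

definition block :: "nat \<Rightarrow> nat set" where
  "block = the_inv_into P (block_label P)"

definition hit :: "nat \<Rightarrow> nat \<Rightarrow> bool" where
  "hit l c \<longleftrightarrow> c \<in> {1..j} \<and> l \<in> block c"

abbreviation key :: "nat \<Rightarrow> nat \<Rightarrow> nat" where
  "key i \<equiv> hit_key hit (Apart a k) t (Apart a i)"

text \<open>\<open>pos i\<close> is to be the inverse of the \<open>i\<close>-th deck: it sends a card to its position.\<close>

definition pos :: "nat \<Rightarrow> nat \<Rightarrow> nat" where
  "pos i = ranking_perm n (key i)"

definition shuffle :: "nat \<Rightarrow> nat \<Rightarrow> nat" where
  "shuffle i = (if i \<in> {1..k} then pos (i - 1) \<circ> inv (pos i) else id)"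

lemma partition: "partition_on {1..Apart a k} P"
  and card_P: "card P = j"
  and segment_P: "\<And>B i x y. B \<in> P \<Longrightarrow> i \<in> {1..k} \<Longrightarrow> x \<in> B \<Longrightarrow> y \<in> B \<Longrightarrow>
                    x \<in> seg a i \<Longrightarrow> y \<in> seg a i \<Longrightarrow> x = y"
  using P_in_Qset by (auto simp: Qset_def)

lemma bij_betw_block: "bij_betw block {1..j} P"
  unfolding block_def
  using bij_betw_the_inv_into[OF bij_betw_block_label[OF partition]] card_P by simp

lemma block_in: "c \<in> {1..j} \<Longrightarrow> block c \<in> P"
  using bij_betw_block by (auto simp: bij_betw_def)

lemma block_label_block: "c \<in> {1..j} \<Longrightarrow> block_label P (block c) = c"
  unfolding block_def
  using f_the_inv_into_f_bij_betw[OF bij_betw_block_label[OF partition]] card_P by simp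

lemma block_subset:
  assumes "c \<in> {1..j}"
  shows "block c \<noteq> {}" "block c \<subseteq> {1..Apart a k}"
  using block_in[OF assms] partition_onD1[OF partition] partition_onD3[OF partition] by auto

lemma hit_in_range: "hit l c \<Longrightarrow> l \<in> {1..Apart a k} \<and> c \<in> {1..j}"
  unfolding hit_def using block_subset(2) by blast

lemma hit_unique: "hit l c \<Longrightarrow> hit l c' \<Longrightarrow> c = c'"
  using partition_onD2[OF partition] block_in bij_betw_block
  unfolding hit_def bij_betw_def by (metis disjointD disjoint_iff inj_onD)

lemma hit_exists: "l \<in> {1..Apart a k} \<Longrightarrow> \<exists>c. hit l c"
  using partition_onD1[OF partition] bij_betw_block
  unfolding hit_def bij_betw_def by (metis Union_iff imageE)

lemma hit_segment:
  "hit l c \<Longrightarrow> hit l' c \<Longrightarrow> i \<in> {1..k} \<Longrightarrow> l \<in> seg a i \<Longrightarrow> l' \<in> seg a i \<Longrightarrow> l = l'"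
  unfolding hit_def by (meson segment_P block_in)

lemma t_permutes: "t permutes {1..n}"
  using termB_t by (rule termB_permutes)

lemma pos_permutes: "pos i permutes {1..n}"
  unfolding pos_def using hit_in_range hit_unique t_permutes
  by (intro ranking_perm_permutes inj_on_hit_key) auto

lemma pos_less_iff: "x \<in> {1..n} \<Longrightarrow> y \<in> {1..n} \<Longrightarrow> pos i x < pos i y \<longleftrightarrow> key i x < key i y"
  unfolding pos_def by (rule ranking_perm_less_iff)

lemma key_0_block: "c \<in> {1..j} \<Longrightarrow> key 0 c = Min (block c)"
proof -
  assume c: "c \<in> {1..j}"
  have Min_in: "Min (block c) \<in> block c"
    using partition_on_Min_in[OF partition _ block_in[OF c]] by simp
  have fin: "finite (block c)" using block_subset(2)[OF c] finite_subset by blast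
  show ?thesis
  proof (rule hit_key_eq)
    show "hit (Min (block c)) c" using c Min_in by (simp add: hit_def)
    show "Apart a 0 < Min (block c)" using Min_in block_subset(2)[OF c] by (auto simp: Apart_0)
    show "\<not> hit l c" if "l < Min (block c)" for l
      using that Min_le[OF fin, of l] by (auto simp: hit_def)
  qed
qed

lemma key_no_hit: "c \<notin> {1..j} \<Longrightarrow> key i c = Apart a k + inv t c"
  using hit_in_range by (intro hit_key_no_hit) blast

lemma key_0_strict_mono: "strict_mono_on {1..n} (key 0)"
proof (rule strict_mono_onI)
  fix x y assume x: "x \<in> {1..n}" and y: "y \<in> {1..n}" and "x < y"
  have inv_t: "inv t x \<in> {1..n}" "inv t y \<in> {1..n}"
    using permutes_inv_in[OF t_permutes] x y by auto
  show "key 0 x < key 0 y"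
  proof (cases "y \<le> j")
    case True
    then have xy: "x \<in> {1..j}" "y \<in> {1..j}" using x y \<open>x < y\<close> by auto
    then have "block_label P (block x) < block_label P (block y)"
      using \<open>x < y\<close> by (simp add: block_label_block)
    then show ?thesis
      using block_label_less_iff[OF partition _ block_in block_in] xy by (simp add: key_0_block)
  next
    case y_gt: False
    show ?thesis
    proof (cases "x \<le> j")
      case True
      then have "x \<in> {1..j}" using x by simp
      then have "key 0 x \<le> Apart a k"
        using partition_on_Min_in[OF partition _ block_in] block_subset(2) key_0_block
        by fastforce
      then show ?thesis using y_gt key_no_hit[of y] inv_t by simp
    next
      case False
      have "t (inv t x) < t (inv t y)" using \<open>x < y\<close> permutes_inverses(1)[OF t_permutes] by simp
      moreover have "j < t (inv t x)" "j < t (inv t y)"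
        using False y_gt permutes_inverses(1)[OF t_permutes] by auto
      ultimately have "inv t x < inv t y" using termB_less_iff[OF termB_t inv_t] by simp
      then show ?thesis using False y_gt key_no_hit[of x] key_no_hit[of y] by simp
    qed
  qed
qed

lemma pos_0: "pos 0 = id"
proof -
  have "\<forall>x\<in>{1..n}. \<forall>y\<in>{1..n}. id x < id y \<longleftrightarrow> key 0 x < key 0 y"
    using strict_mono_on_less[OF key_0_strict_mono] by simp
  then show ?thesis unfolding pos_def by (rule ranking_perm_unique[OF permutes_id])
qed

lemma pos_k: "pos k = inv t"
  unfolding pos_def
proof (rule ranking_perm_unique[OF permutes_inv[OF t_permutes]])
  have "key k c = Apart a k + inv t c" for c
    using hit_in_range by (intro hit_key_no_hit) fastforce
  then show "\<forall>x\<in>{1..n}. \<forall>y\<in>{1..n}. inv t x < inv t y \<longleftrightarrow> key k x < key k y" by simp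
qed

lemma key_segment_hit:
  assumes i: "i \<in> {1..k}" and m: "m \<in> {1..a i}" and hit: "hit (Apart a (i - 1) + m) c"
  shows "key (i - 1) c = Apart a (i - 1) + m"
proof (rule hit_key_eq[where R=hit and l="Apart a (i - 1) + m"])
  fix l assume l: "Apart a (i - 1) < l" "l < Apart a (i - 1) + m"
  then have "l \<in> seg a i" "Apart a (i - 1) + m \<in> seg a i"
    using m Apart_pred[of i a] i by (auto simp: seg_def)
  then show "\<not> hit l c" using hit_segment[OF _ hit i] l(2) by fastforce
qed (use hit m in simp_all)

lemma keys_up_to_segment_hit:
  assumes i: "i \<in> {1..k}" and m: "m \<in> {1..a i}"
  shows "{x \<in> key (i - 1) ` {1..n}. x \<le> Apart a (i - 1) + m} = {Apart a (i - 1) + 1..Apart a (i - 1) + m}"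
proof
  show "{x \<in> key (i - 1) ` {1..n}. x \<le> Apart a (i - 1) + m} \<subseteq> {Apart a (i - 1) + 1..Apart a (i - 1) + m}"
  proof
    fix x assume "x \<in> {x \<in> key (i - 1) ` {1..n}. x \<le> Apart a (i - 1) + m}"
    then obtain z where z: "z \<in> {1..n}" "x = key (i - 1) z" "x \<le> Apart a (i - 1) + m" by blast
    have "Apart a (i - 1) \<le> Apart a k" using i by (intro Apart_mono) auto
    from hit_key_gt[where R=hit, OF t_permutes z(1) this]
    show "x \<in> {Apart a (i - 1) + 1..Apart a (i - 1) + m}" using z(2,3) by simp
  qed
next
  show "{Apart a (i - 1) + 1..Apart a (i - 1) + m} \<subseteq> {x \<in> key (i - 1) ` {1..n}. x \<le> Apart a (i - 1) + m}"
  proof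
    fix l assume l: "l \<in> {Apart a (i - 1) + 1..Apart a (i - 1) + m}"
    have "Apart a (i - 1) + m \<le> Apart a k"
      using i m Apart_pred[of i a] Apart_mono[of i k a] by auto
    then obtain z where z: "hit l z" using hit_exists[of l] l by auto
    then have "z \<in> {1..n}" using hit_in_range[OF z] j_le_n by auto
    moreover have "key (i - 1) z = l"
    proof -
      have "l - Apart a (i - 1) \<in> {1..a i}" using l m by auto
      then show ?thesis using key_segment_hit[OF i, of "l - Apart a (i - 1)" z] l z by simp
    qed
    ultimately have "l \<in> key (i - 1) ` {1..n}" by (metis imageI)
    then show "l \<in> {x \<in> key (i - 1) ` {1..n}. x \<le> Apart a (i - 1) + m}" using l by simp
  qed
qed

lemma pos_segment_iff:
  assumes i: "i \<in> {1..k}" and m: "m \<in> {1..a i}"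
  shows "pos (i - 1) c = m \<longleftrightarrow> hit (Apart a (i - 1) + m) c"
proof -
  have "Apart a (i - 1) + m \<le> Apart a k"
    using i m Apart_pred[of i a] Apart_mono[of i k a] by auto
  then obtain y where y: "hit (Apart a (i - 1) + m) y" using hit_exists[of "Apart a (i - 1) + m"] m by auto
  then have y_in: "y \<in> {1..n}" using hit_in_range[OF y] j_le_n by auto
  have "pos (i - 1) y = rank (key (i - 1) ` {1..n}) (Apart a (i - 1) + m)"
    using y_in key_segment_hit[OF i m y] by (simp add: pos_def ranking_perm_def)
  also have "\<dots> = m"
    using keys_up_to_segment_hit[OF i m] by (simp add: rank_def)
  finally have pos_y: "pos (i - 1) y = m" .
  have "pos (i - 1) c = m \<Longrightarrow> c = y"
  proof -
    assume pos_c: "pos (i - 1) c = m"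
    have "a i \<le> n" using a_le_n i by blast
    then have "c \<in> {1..n}" using pos_c m permutes_not_in[OF pos_permutes, of c "i - 1"] by fastforce
    then show "c = y" 
      using pos_c pos_y permutes_inj[OF pos_permutes, of "i - 1"] by (metis injD)
  qed
  then show ?thesis using y pos_y hit_unique by blast
qed

lemma key_pred_beyond_segment:
  assumes i: "i \<in> {1..k}" and "a i < pos (i - 1) x"
  shows "key (i - 1) x = key i x"
  using hit_key_segment_skip[of "a i" hit "Apart a (i - 1)" x "pos (i - 1) x"] pos_segment_iff[OF i]
    assms Apart_pred[of i a] by auto

lemma shuffle_permutes: "shuffle i permutes {1..n}"
  unfolding shuffle_def using pos_permutes by (simp add: permutes_compose permutes_inv)

lemma deck_shuffle: "i \<le> k \<Longrightarrow> deck shuffle i = inv (pos i)"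
proof (induction i)
  case 0
  then show ?case by (simp add: pos_0 inv_id)
next
  case (Suc i)
  then have "shuffle (Suc i) = pos i \<circ> inv (pos (Suc i))" by (simp add: shuffle_def)
  then have "deck shuffle (Suc i) = (inv (pos i) \<circ> pos i) \<circ> inv (pos (Suc i))"
    using Suc by (simp add: comp_assoc)
  then show ?case using permutes_inv_o(2)[OF pos_permutes] by simp
qed

lemma shuffle_termB: "i \<in> {1..k} \<Longrightarrow> termB n (a i) (shuffle i)"
  unfolding termB_def
proof (intro conjI ballI impI)
  fix p q assume i: "i \<in> {1..k}" and pq: "p \<in> {1..n}" "q \<in> {1..n}"
    and order: "p < q \<and> a i < shuffle i p \<and> a i < shuffle i q"
  let ?x = "inv (pos i) p" and ?y = "inv (pos i) q"
  have xy: "?x \<in> {1..n}" "?y \<in> {1..n}" using pq permutes_inv_in[OF pos_permutes] by auto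
  have "pos i ?x < pos i ?y" using order permutes_inverses(1)[OF pos_permutes] by simp
  then have "key i ?x < key i ?y" using pos_less_iff[OF xy] by simp
  moreover have "key (i - 1) ?x = key i ?x" "key (i - 1) ?y = key i ?y"
    using key_pred_beyond_segment[OF i] order i by (auto simp: shuffle_def)
  ultimately show "shuffle i p < shuffle i q" using pos_less_iff[OF xy] i by (simp add: shuffle_def)
qed (use shuffle_permutes in simp)

lemma hits_shuffle: "hits k a shuffle l c \<longleftrightarrow> hit l c"
proof (cases "l \<in> {1..Apart a k}")
  case True
  then obtain i m where i: "i \<in> {1..k}" and m: "m \<in> {1..a i}" and l: "l = Apart a (i - 1) + m"
    using segment_decomp_exists by blast
  have "deck shuffle (i - 1) = inv (pos (i - 1))" using i by (intro deck_shuffle) auto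
  then have "hits k a shuffle l c \<longleftrightarrow> inv (pos (i - 1)) m = c"
    using hits_segment_iff[where k=k and a=a and sig=shuffle, OF i m] l by simp
  also have "\<dots> \<longleftrightarrow> pos (i - 1) c = m" using permutes_inv_eq[OF pos_permutes] by metis
  also have "\<dots> \<longleftrightarrow> hit l c" using pos_segment_iff[OF i m] l by simp
  finally show ?thesis .
qed (use hits_in_range hit_in_range in blast)

lemma shuffle_in_Dset: "shuffle \<in> Dset n k a j t"
proof -
  have "hit_block k a shuffle c = (if c \<in> {1..j} then block c else {})" for c
    by (auto simp: hit_block_eq hits_shuffle hit_def)
  then have "cards_hit k a shuffle = {1..j}"
    using block_subset(1) by (auto simp: cards_hit_eq)
  moreover have "deck shuffle k = t"
    using deck_shuffle[of k] pos_k permutes_inv_inv[OF t_permutes] by simp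
  ultimately show ?thesis using shuffle_termB by (simp add: Dset_def shuffle_def)
qed

lemma phi_shuffle: "phi k a j shuffle = P"
proof -
  have "hit_block k a shuffle c = block c" if "c \<in> {1..j}" for c
    using that by (simp add: hit_block_eq hits_shuffle hit_def)
  then have "phi k a j shuffle = block ` {1..j}" by (simp add: phi_eq_hit_blocks)
  then show ?thesis using bij_betw_block by (simp add: bij_betw_def)
qed

end

lemma Qset_subset_phi_image:
  assumes "\<forall>i\<in>{1..k}. a i \<le> n" "j \<le> n" "termB n j t"
  shows "Qset k a j \<subseteq> phi k a j ` Dset n k a j t"
proof
  fix P assume "P \<in> Qset k a j"
  then interpret partition_realisation n k j a t P using assms by unfold_locales
  show "P \<in> phi k a j ` Dset n k a j t" using shuffle_in_Dset phi_shuffle by (metis imageI)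
qed

theorem theorem3p2:
  fixes n k j :: nat and a :: "nat \<Rightarrow> nat" and t :: "nat \<Rightarrow> nat"
  assumes "k \<ge> 1"
    and "\<forall>i\<in>{1..k}. a i \<in> {1..n}"
    and "Max (a ` {1..k}) \<le> j" and "j \<le> min (Apart a k) n"
    and "termB n j t"
  shows "bij_betw (phi k a j) (Dset n k a j t) (Qset k a j)"
proof -
  have j_le_n: "j \<le> n" using assms(4) by simp
  have "phi k a j ` Dset n k a j t \<subseteq> Qset k a j" using phi_in_Qset by blast
  moreover have "Qset k a j \<subseteq> phi k a j ` Dset n k a j t"
    using assms(2,5) j_le_n by (intro Qset_subset_phi_image) auto
  ultimately show ?thesis using inj_on_phi[OF j_le_n] by (simp add: bij_betw_def)
qed

end
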